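(* For every preference profile $P$, every Pareto-optimal assignment is semi-popular, i.e. $\mathit{PO}(P)\subseteq SP(P)$.
   Context: Let $N=\{1,\dots,n\}$ be agents and $H$ a set of $n$ houses. A profile $P=(\succ_1,\dots,\succ_n)$ gives each agent a strict linear order on $H$. An assignment is a bijection $\mu:N\to H$; $M$ is the set of all assignments. Agent $x$ weakly prefers $\mu$ to $\lambda$ if $\mu(x)\succ_x\lambda(x)$ or $\mu(x)=\lambda(x)$, strictly if $\mu(x)\succ_x\lambda(x)$. $N_{\mu,\lambda}$ is the set of agents weakly preferring $\mu$ to $\lambda$; $\mu\succsim\lambda$ if $|N_{\mu,\lambda}|\ge|N_{\lambda,\mu}|$. $\mu$ Pareto-dominates $\lambda$ if all agents weakly prefer $\mu$ to $\lambda$ and some agent strictly; $\mathit{PO}(P)$ is the set of assignments not Pareto-dominated by any assignment. An assignment $\mu$ is semi-popular if $|\{\lambda\in M:\mu\succsim\lambda\}|\ge |M|/2$; $SP(P)$ is the set of semi-popular assignments. *)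

theory Defs
  imports "HOL-Library.FuncSet"
begin

text \<open>A profile P gives each agent x a strict preference relation P x on houses;
  (h, h') \<in> P x means agent x strictly prefers h to h'.\<close>

definition assignments :: "'a set \<Rightarrow> 'h set \<Rightarrow> ('a \<Rightarrow> 'h) set" where
  "assignments N H = {\<mu> \<in> N \<rightarrow>\<^sub>E H. bij_betw \<mu> N H}"

definition weakly_prefers :: "('a \<Rightarrow> 'h rel) \<Rightarrow> 'a \<Rightarrow> ('a \<Rightarrow> 'h) \<Rightarrow> ('a \<Rightarrow> 'h) \<Rightarrow> bool" where
  "weakly_prefers P x \<mu> l \<longleftrightarrow> (\<mu> x, l x) \<in> P x \<or> \<mu> x = l x"

definition strictly_prefers :: "('a \<Rightarrow> 'h rel) \<Rightarrow> 'a \<Rightarrow> ('a \<Rightarrow> 'h) \<Rightarrow> ('a \<Rightarrow> 'h) \<Rightarrow> bool" where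
  "strictly_prefers P x \<mu> l \<longleftrightarrow> (\<mu> x, l x) \<in> P x"

definition weak_set :: "'a set \<Rightarrow> ('a \<Rightarrow> 'h rel) \<Rightarrow> ('a \<Rightarrow> 'h) \<Rightarrow> ('a \<Rightarrow> 'h) \<Rightarrow> 'a set" where
  "weak_set N P \<mu> l = {x \<in> N. weakly_prefers P x \<mu> l}"

definition pop_geq :: "'a set \<Rightarrow> ('a \<Rightarrow> 'h rel) \<Rightarrow> ('a \<Rightarrow> 'h) \<Rightarrow> ('a \<Rightarrow> 'h) \<Rightarrow> bool" where
  "pop_geq N P \<mu> l \<longleftrightarrow> card (weak_set N P \<mu> l) \<ge> card (weak_set N P l \<mu>)"

definition pareto_dominates :: "'a set \<Rightarrow> ('a \<Rightarrow> 'h rel) \<Rightarrow> ('a \<Rightarrow> 'h) \<Rightarrow> ('a \<Rightarrow> 'h) \<Rightarrow> bool" where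
  "pareto_dominates N P \<mu> l \<longleftrightarrow>
     (\<forall>x\<in>N. weakly_prefers P x \<mu> l) \<and> (\<exists>x\<in>N. strictly_prefers P x \<mu> l)"

definition PO :: "'a set \<Rightarrow> 'h set \<Rightarrow> ('a \<Rightarrow> 'h rel) \<Rightarrow> ('a \<Rightarrow> 'h) set" where
  "PO N H P = {\<mu> \<in> assignments N H. \<not> (\<exists>l\<in>assignments N H. pareto_dominates N P l \<mu>)}"

definition SP :: "'a set \<Rightarrow> 'h set \<Rightarrow> ('a \<Rightarrow> 'h rel) \<Rightarrow> ('a \<Rightarrow> 'h) set" where
  "SP N H P = {\<mu> \<in> assignments N H.
      2 * card {l \<in> assignments N H. pop_geq N P \<mu> l} \<ge> card (assignments N H)}"

end

theory Submission
  imports Defs "HOL-Combinatorics.Transposition"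
begin

text \<open>Fix a Pareto-optimal assignment \<mu> and reflect every assignment \<lambda> through \<mu>:
  \<lambda>* = \<mu> \<circ> \<lambda>\<inverse> \<circ> \<mu>. This is an involution on the assignments. The map
  x \<mapsto> \<lambda>\<inverse>(\<mu> x) injects the agents weakly preferring \<lambda>* to \<mu> into the agents
  weakly preferring \<mu> to \<lambda>: otherwise x and \<lambda>\<inverse>(\<mu> x) would strictly prefer
  each other's house under \<mu>, and swapping them would Pareto-improve \<mu>.
  Applied to \<lambda> and to \<lambda>*, this shows that \<mu> \<succsim> \<lambda> or \<mu> \<succsim> \<lambda>*, so the
  assignments beaten by \<mu> together with their reflections cover all of M.\<close>

lemma card_le_double_if_involution_covers:
  assumes "finite M"
    and "\<And>l. l \<in> M \<Longrightarrow> f l \<in> M \<and> f (f l) = l"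
    and "\<And>l. l \<in> M \<Longrightarrow> Q l \<or> Q (f l)"
  shows "card M \<le> 2 * card {l \<in> M. Q l}"
proof -
  let ?A = "{l \<in> M. Q l}"
  have "M \<subseteq> ?A \<union> f ` ?A"
  proof
    fix l assume "l \<in> M"
    with assms(2,3)[of l] show "l \<in> ?A \<union> f ` ?A"
      by (metis Un_iff image_eqI mem_Collect_eq)
  qed
  have "finite ?A" using assms(1) by simp
  have "card M \<le> card (?A \<union> f ` ?A)"
    using \<open>M \<subseteq> _\<close> \<open>finite ?A\<close> by (intro card_mono) auto
  also have "\<dots> \<le> card ?A + card (f ` ?A)" by (rule card_Un_le)
  also have "\<dots> \<le> 2 * card ?A" using card_image_le[OF \<open>finite ?A\<close>, of f] by simp
  finally show ?thesis .
qed

lemma finite_assignments: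
  assumes "finite N" and "finite H"
  shows "finite (assignments N H)"
proof (rule finite_subset)
  show "assignments N H \<subseteq> N \<rightarrow>\<^sub>E H" by (auto simp: assignments_def)
  show "finite (N \<rightarrow>\<^sub>E H)" using assms by (rule finite_PiE)
qed

lemma assignment_bij_betw:
  "\<mu> \<in> assignments N H \<Longrightarrow> bij_betw \<mu> N H"
  by (simp add: assignments_def)

definition mirror :: "'a set \<Rightarrow> ('a \<Rightarrow> 'h) \<Rightarrow> ('a \<Rightarrow> 'h) \<Rightarrow> ('a \<Rightarrow> 'h)" where
  "mirror N \<mu> l = restrict (\<mu> \<circ> inv_into N l \<circ> \<mu>) N"

lemma mirror_in_assignments:
  assumes "\<mu> \<in> assignments N H" and "l \<in> assignments N H"
  shows "mirror N \<mu> l \<in> assignments N H"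
proof -
  have "bij_betw (\<mu> \<circ> inv_into N l \<circ> \<mu>) N H"
    using assms[THEN assignment_bij_betw]
    by (meson bij_betw_inv_into bij_betw_trans)
  then have "bij_betw (mirror N \<mu> l) N H"
    by (rule bij_betw_cong[THEN iffD1, rotated]) (simp add: mirror_def)
  then show ?thesis
    by (auto simp: assignments_def mirror_def bij_betw_def)
qed

lemma mirror_mirror:
  assumes \<mu>: "\<mu> \<in> assignments N H" and l: "l \<in> assignments N H"
  shows "mirror N \<mu> (mirror N \<mu> l) = l"
proof
  fix x
  have b\<mu>: "bij_betw \<mu> N H" and bl: "bij_betw l N H"
    using \<mu> l by (simp_all add: assignment_bij_betw)
  show "mirror N \<mu> (mirror N \<mu> l) x = l x"
  proof (cases "x \<in> N")
    case True
    define z where "z = inv_into N \<mu> (l x)"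
    have "l x \<in> H" using bl True by (auto simp: bij_betw_def)
    then have "z \<in> N" and "\<mu> z = l x"
      using b\<mu> by (auto simp: z_def bij_betw_def f_inv_into_f)
    then have "mirror N \<mu> l z = \<mu> x"
      using True bl b\<mu> by (simp add: mirror_def bij_betw_def)
    then have "inv_into N (mirror N \<mu> l) (\<mu> x) = z"
      using mirror_in_assignments[OF \<mu> l] \<open>z \<in> N\<close>
      by (intro inv_into_f_eq) (auto simp: assignments_def bij_betw_def)
    then show ?thesis
      using True \<open>\<mu> z = l x\<close> by (simp add: mirror_def)
  next
    case False
    then show ?thesis using l by (auto simp: mirror_def assignments_def)
  qed
qed

lemma PO_no_mutual_envy:
  assumes \<mu>: "\<mu> \<in> PO N H P" and "x \<in> N" "y \<in> N" "x \<noteq> y"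
    and "(\<mu> y, \<mu> x) \<in> P x" and "(\<mu> x, \<mu> y) \<in> P y"
  shows False
proof -
  have "\<mu> \<in> assignments N H" using \<mu> by (simp add: PO_def)
  let ?\<nu> = "Fun.swap x y \<mu>"
  have "bij_betw ?\<nu> N H"
    using \<open>\<mu> \<in> assignments N H\<close> \<open>x \<in> N\<close> \<open>y \<in> N\<close>
    by (simp add: bij_betw_swap_iff assignment_bij_betw)
  moreover have "?\<nu> \<in> N \<rightarrow>\<^sub>E H"
    using \<open>\<mu> \<in> assignments N H\<close> \<open>x \<in> N\<close> \<open>y \<in> N\<close>
    by (auto simp: assignments_def transpose_def)
  ultimately have "?\<nu> \<in> assignments N H" by (simp add: assignments_def)
  moreover have "pareto_dominates N P ?\<nu> \<mu>"
    using assms(2-6)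
    by (auto simp: pareto_dominates_def weakly_prefers_def strictly_prefers_def transpose_def)
  ultimately show False using \<mu> by (auto simp: PO_def)
qed

lemma PO_weakly_prefers_mirror_imp:
  assumes \<mu>: "\<mu> \<in> PO N H P" and l: "l \<in> assignments N H"
    and total: "\<forall>i\<in>N. total_on H (P i)"
    and x: "x \<in> N" and pref: "weakly_prefers P x (mirror N \<mu> l) \<mu>"
  shows "weakly_prefers P (inv_into N l (\<mu> x)) \<mu> l"
proof -
  define y where "y = inv_into N l (\<mu> x)"
  have b\<mu>: "bij_betw \<mu> N H" and bl: "bij_betw l N H"
    using \<mu> l by (simp_all add: PO_def assignment_bij_betw)
  have "\<mu> x \<in> H" using x b\<mu> by (auto simp: bij_betw_def)
  then have "y \<in> N" and "l y = \<mu> x"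
    using bl by (auto simp: y_def bij_betw_def f_inv_into_f)
  have "\<mu> y \<in> H" using \<open>y \<in> N\<close> b\<mu> by (auto simp: bij_betw_def)
  show ?thesis
  proof (cases "\<mu> y = \<mu> x")
    case True
    then show ?thesis using \<open>l y = \<mu> x\<close> by (simp add: y_def weakly_prefers_def)
  next
    case False
    then have "(\<mu> y, \<mu> x) \<in> P x"
      using pref x by (simp add: weakly_prefers_def mirror_def y_def)
    then have "(\<mu> x, \<mu> y) \<notin> P y"
      using PO_no_mutual_envy[OF \<mu> x \<open>y \<in> N\<close>] False by blast
    then have "(\<mu> y, \<mu> x) \<in> P y"
      using total \<open>y \<in> N\<close> \<open>\<mu> x \<in> H\<close> \<open>\<mu> y \<in> H\<close> False by (auto simp: total_on_def)
    then show ?thesis using \<open>l y = \<mu> x\<close> by (simp add: y_def weakly_prefers_def)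
  qed
qed

lemma PO_card_weak_set_mirror_le:
  assumes \<mu>: "\<mu> \<in> PO N H P" and l: "l \<in> assignments N H" and "finite N"
    and total: "\<forall>i\<in>N. total_on H (P i)"
  shows "card (weak_set N P (mirror N \<mu> l) \<mu>) \<le> card (weak_set N P \<mu> l)"
proof (rule card_inj_on_le)
  let ?g = "inv_into N l \<circ> \<mu>"
  have "\<mu> \<in> assignments N H" using \<mu> by (simp add: PO_def)
  then have "bij_betw ?g N N"
    using l by (intro bij_betw_trans bij_betw_inv_into assignment_bij_betw)
  then show "inj_on ?g (weak_set N P (mirror N \<mu> l) \<mu>)"
    by (rule inj_on_subset[OF bij_betw_imp_inj_on]) (auto simp: weak_set_def)
  show "?g ` weak_set N P (mirror N \<mu> l) \<mu> \<subseteq> weak_set N P \<mu> l"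
  proof
    fix z assume "z \<in> ?g ` weak_set N P (mirror N \<mu> l) \<mu>"
    then obtain x where "x \<in> N" "weakly_prefers P x (mirror N \<mu> l) \<mu>" and z: "z = ?g x"
      by (auto simp: weak_set_def)
    then have "weakly_prefers P z \<mu> l"
      using PO_weakly_prefers_mirror_imp[OF \<mu> l total] by simp
    moreover have "z \<in> N" using bij_betw_apply[OF \<open>bij_betw ?g N N\<close> \<open>x \<in> N\<close>] z by simp
    ultimately show "z \<in> weak_set N P \<mu> l" by (simp add: weak_set_def)
  qed
  show "finite (weak_set N P \<mu> l)" using \<open>finite N\<close> by (simp add: weak_set_def)
qed

lemma PO_pop_geq_or_mirror:
  assumes \<mu>: "\<mu> \<in> PO N H P" and l: "l \<in> assignments N H" and "finite N"
    and total: "\<forall>i\<in>N. total_on H (P i)"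
  shows "pop_geq N P \<mu> l \<or> pop_geq N P \<mu> (mirror N \<mu> l)"
proof -
  have \<mu>_assignment: "\<mu> \<in> assignments N H" using \<mu> by (simp add: PO_def)
  have "card (weak_set N P l \<mu>) \<le> card (weak_set N P \<mu> (mirror N \<mu> l))"
    using PO_card_weak_set_mirror_le[OF \<mu> mirror_in_assignments[OF \<mu>_assignment l] \<open>finite N\<close> total]
    by (simp add: mirror_mirror[OF \<mu>_assignment l])
  then show ?thesis
    using PO_card_weak_set_mirror_le[OF \<mu> l \<open>finite N\<close> total] by (auto simp: pop_geq_def)
qed

theorem proposition4p2:
  fixes n :: nat and H :: "'h set" and P :: "nat \<Rightarrow> 'h rel"
  assumes "finite H" and "card H = n"
    and "\<forall>i\<in>{1..n}. strict_linear_order_on H (P i) \<and> P i \<subseteq> H \<times> H"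
  shows "PO {1..n} H P \<subseteq> SP {1..n} H P"
proof
  fix \<mu> assume \<mu>: "\<mu> \<in> PO {1..n} H P"
  let ?M = "assignments {1..n} H"
  have "\<mu> \<in> ?M" using \<mu> by (simp add: PO_def)
  have total: "\<forall>i\<in>{1..n}. total_on H (P i)"
    using assms(3) by (simp add: strict_linear_order_on_def)
  have "card ?M \<le> 2 * card {l \<in> ?M. pop_geq {1..n} P \<mu> l}"
  proof (rule card_le_double_if_involution_covers)
    show "finite ?M" using \<open>finite H\<close> by (simp add: finite_assignments)
    show "mirror {1..n} \<mu> l \<in> ?M \<and> mirror {1..n} \<mu> (mirror {1..n} \<mu> l) = l" if "l \<in> ?M" for l
      using mirror_in_assignments mirror_mirror \<open>\<mu> \<in> ?M\<close> that by blast
    show "pop_geq {1..n} P \<mu> l \<or> pop_geq {1..n} P \<mu> (mirror {1..n} \<mu> l)" if "l \<in> ?M" for l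
      using PO_pop_geq_or_mirror[OF \<mu> that _ total] by simp
  qed
  then show "\<mu> \<in> SP {1..n} H P" using \<open>\<mu> \<in> ?M\<close> by (simp add: SP_def)
qed

end
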